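(* Let $G$ be a graph without isolated vertices. There exists a GDDS $S$ of $G$ such that $|\widehat{S^1}|\ge|\widehat{S^2}|$; in particular $|\widehat{S^1}|\ge\gamma_{gr}^{\times2}(G)/2$.
   Context: Graphs are finite, simple, undirected; $N[v]$ closed neighborhood. A sequence $S=(v_1,\dots,v_k)$ of distinct vertices is a double neighborhood sequence if for each $i$ some $w\in N[v_i]$ satisfies $|\{j<i:w\in N[v_j]\}|\le1$; a double dominating sequence (DDS) if moreover its vertex set $D$ satisfies $|N[w]\cap D|\ge2$ for all $w$; a GDDS is a DDS of maximum length, and this length is $\gamma_{gr}^{\times2}(G)$. $\widehat S$ is the vertex set of $S$. $S^1$ is the subsequence of $S$ consisting of those $v_i$ with $N[v_i]\setminus\bigcup_{j<i}N[v_j]\neq\emptyset$, and $S^2$ is the subsequence of the remaining vertices. *)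

theory Defs
  imports Main
begin

definition simple_graph :: "'a set \<Rightarrow> ('a \<Rightarrow> 'a \<Rightarrow> bool) \<Rightarrow> bool" where
  "simple_graph V E \<longleftrightarrow> finite V \<and> (\<forall>u v. E u v \<longrightarrow> u \<in> V \<and> v \<in> V)
     \<and> (\<forall>u v. E u v \<longrightarrow> E v u) \<and> (\<forall>v. \<not> E v v)"

definition no_isolated :: "'a set \<Rightarrow> ('a \<Rightarrow> 'a \<Rightarrow> bool) \<Rightarrow> bool" where
  "no_isolated V E \<longleftrightarrow> (\<forall>v\<in>V. \<exists>w. E v w)"

definition cnbhd :: "'a set \<Rightarrow> ('a \<Rightarrow> 'a \<Rightarrow> bool) \<Rightarrow> 'a \<Rightarrow> 'a set" where
  "cnbhd V E v = insert v {w \<in> V. E v w}"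

definition double_nbhd_seq :: "'a set \<Rightarrow> ('a \<Rightarrow> 'a \<Rightarrow> bool) \<Rightarrow> 'a list \<Rightarrow> bool" where
  "double_nbhd_seq V E S \<longleftrightarrow> distinct S \<and> set S \<subseteq> V \<and>
     (\<forall>i < length S. \<exists>w \<in> cnbhd V E (S ! i).
        card {j. j < i \<and> w \<in> cnbhd V E (S ! j)} \<le> 1)"

definition is_DDS :: "'a set \<Rightarrow> ('a \<Rightarrow> 'a \<Rightarrow> bool) \<Rightarrow> 'a list \<Rightarrow> bool" where
  "is_DDS V E S \<longleftrightarrow> double_nbhd_seq V E S \<and>
     (\<forall>w \<in> V. card (cnbhd V E w \<inter> set S) \<ge> 2)"

definition gamma_gr2 :: "'a set \<Rightarrow> ('a \<Rightarrow> 'a \<Rightarrow> bool) \<Rightarrow> nat" where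
  "gamma_gr2 V E = Max {length S | S. is_DDS V E S}"

definition is_GDDS :: "'a set \<Rightarrow> ('a \<Rightarrow> 'a \<Rightarrow> bool) \<Rightarrow> 'a list \<Rightarrow> bool" where
  "is_GDDS V E S \<longleftrightarrow> is_DDS V E S \<and> (\<forall>T. is_DDS V E T \<longrightarrow> length T \<le> length S)"

definition seq1 :: "'a set \<Rightarrow> ('a \<Rightarrow> 'a \<Rightarrow> bool) \<Rightarrow> 'a list \<Rightarrow> 'a list" where
  "seq1 V E S = [S ! i. i \<leftarrow> [0..<length S],
      cnbhd V E (S ! i) - (\<Union>j\<in>{..<i}. cnbhd V E (S ! j)) \<noteq> {}]"

definition seq2 :: "'a set \<Rightarrow> ('a \<Rightarrow> 'a \<Rightarrow> bool) \<Rightarrow> 'a list \<Rightarrow> 'a list" where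
  "seq2 V E S = [S ! i. i \<leftarrow> [0..<length S],
      cnbhd V E (S ! i) - (\<Union>j\<in>{..<i}. cnbhd V E (S ! j)) = {}]"

end

(* Take a GDDS S maximising |S^1|. A vertex x of S^2 dominates nothing new, yet it is legal, so
   some w in N[x] has exactly one earlier dominator y_x; then w was new when y_x was played, so
   y_x lies in S^1. The map x |-> y_x is injective: if x comes before x' and y_x = y_x' = y, then
   moving y to directly after x keeps the sequence legal (predecessor sets only shrink, and y still
   dominates the footprint of x' for the first time), keeps every S^1-vertex in S^1 and adds x to
   S^1, contradicting maximality. Hence |S^2| <= |S^1| while |S^1| + |S^2| = gamma_gr2.
   A GDDS exists because a longest double neighbourhood sequence is dominating: a vertex w
   dominated at most once has, as it is not isolated, a neighbour u outside the sequence, and u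
   could be appended with footprint w. *)

theory Submission
  imports Defs
begin

definition preceding :: "'a list \<Rightarrow> 'a \<Rightarrow> 'a set" where
  "preceding xs z = set (takeWhile (\<lambda>x. x \<noteq> z) xs)"

lemma preceding_Nil [simp]: "preceding [] z = {}"
  by (simp add: preceding_def)

lemma preceding_Cons [simp]:
  "preceding (x # xs) z = (if x = z then {} else insert x (preceding xs z))"
  by (cases "x = z") (simp_all add: preceding_def)

lemma preceding_append:
  "preceding (xs @ ys) z = (if z \<in> set xs then preceding xs z else set xs \<union> preceding ys z)"
  by (induction xs) auto

lemma preceding_subset: "preceding xs z \<subseteq> set xs"
  by (induction xs) auto

lemma not_in_preceding: "z \<notin> preceding xs z"
  by (induction xs) auto

lemma preceding_trans: "y \<in> preceding xs x \<Longrightarrow> preceding xs y \<subseteq> preceding xs x"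
  by (induction xs) (auto split: if_splits)

lemma preceding_total:
  "x \<in> set xs \<Longrightarrow> y \<in> set xs \<Longrightarrow> x \<noteq> y \<Longrightarrow> x \<in> preceding xs y \<or> y \<in> preceding xs x"
  by (induction xs) auto

lemma preceding_nth: "distinct xs \<Longrightarrow> i < length xs \<Longrightarrow> preceding xs (xs ! i) = set (take i xs)"
proof (induction xs arbitrary: i)
  case (Cons a xs)
  then show ?case by (cases i) auto
qed simp

definition double_legal :: "'a set \<Rightarrow> ('a \<Rightarrow> 'a \<Rightarrow> bool) \<Rightarrow> 'a set \<Rightarrow> 'a \<Rightarrow> bool" where
  "double_legal V E P x \<longleftrightarrow> (\<exists>w\<in>cnbhd V E x. card {y\<in>P. w \<in> cnbhd V E y} \<le> 1)"

definition dominates_new :: "'a set \<Rightarrow> ('a \<Rightarrow> 'a \<Rightarrow> bool) \<Rightarrow> 'a set \<Rightarrow> 'a \<Rightarrow> bool" where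
  "dominates_new V E P x \<longleftrightarrow> cnbhd V E x - \<Union>(cnbhd V E ` P) \<noteq> {}"

lemma UN_lessThan_nth_eq_preceding:
  "distinct xs \<Longrightarrow> i < length xs \<Longrightarrow> (\<Union>j\<in>{..<i}. f (xs ! j)) = \<Union>(f ` preceding xs (xs ! i))"
  by (simp add: preceding_nth image_image flip: nth_image lessThan_atLeast0)

lemma set_seq1:
  assumes "distinct S"
  shows "set (seq1 V E S) = {x \<in> set S. dominates_new V E (preceding S x) x}"
  using assms unfolding seq1_def dominates_new_def
  by (auto simp: in_set_conv_nth UN_lessThan_nth_eq_preceding)

lemma set_seq2:
  assumes "distinct S"
  shows "set (seq2 V E S) = {x \<in> set S. \<not> dominates_new V E (preceding S x) x}"
  using assms unfolding seq2_def dominates_new_def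
  by (auto simp: in_set_conv_nth UN_lessThan_nth_eq_preceding)

lemma double_legal_antimono:
  assumes "double_legal V E P x" "Q \<subseteq> P" "finite P"
  shows "double_legal V E Q x"
proof -
  obtain w where w: "w \<in> cnbhd V E x" "card {y\<in>P. w \<in> cnbhd V E y} \<le> 1"
    using assms(1) unfolding double_legal_def by blast
  have "card {y\<in>Q. w \<in> cnbhd V E y} \<le> card {y\<in>P. w \<in> cnbhd V E y}"
    using assms(2,3) by (intro card_mono) auto
  with w show ?thesis
    unfolding double_legal_def by (meson order_trans)
qed

lemma dominates_new_antimono:
  "dominates_new V E P x \<Longrightarrow> Q \<subseteq> P \<Longrightarrow> dominates_new V E Q x"
  unfolding dominates_new_def by blast

lemma dominates_new_imp_double_legal:
  "dominates_new V E P x \<Longrightarrow> double_legal V E P x"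
proof -
  assume "dominates_new V E P x"
  then obtain w where "w \<in> cnbhd V E x" "{y\<in>P. w \<in> cnbhd V E y} = {}"
    unfolding dominates_new_def by blast
  then show ?thesis
    unfolding double_legal_def by (metis card.empty zero_le_one)
qed

lemma card_indices_take:
  assumes "distinct xs" "i \<le> length xs"
  shows "card {j. j < i \<and> Q (xs ! j)} = card {y \<in> set (take i xs). Q y}"
proof -
  have "{y \<in> set (take i xs). Q y} = (!) xs ` {j. j < i \<and> Q (xs ! j)}"
    using assms(2) by (auto simp: in_set_conv_nth)
  moreover have "inj_on ((!) xs) {j. j < i \<and> Q (xs ! j)}"
    using assms by (intro inj_on_nth) auto
  ultimately show ?thesis
    by (simp add: card_image)
qed

lemma double_nbhd_seq_iff:
  "double_nbhd_seq V E S \<longleftrightarrow>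
     distinct S \<and> set S \<subseteq> V \<and> (\<forall>x\<in>set S. double_legal V E (preceding S x) x)"
proof -
  have "card {j. j < i \<and> w \<in> cnbhd V E (S ! j)} = card {y \<in> preceding S (S ! i). w \<in> cnbhd V E y}"
    if "distinct S" "i < length S" for i w
    using that card_indices_take[of S i "\<lambda>y. w \<in> cnbhd V E y"] by (simp add: preceding_nth)
  then show ?thesis
    unfolding double_nbhd_seq_def double_legal_def by (auto simp: all_set_conv_all_nth)
qed

lemma preceding_split:
  assumes "distinct S" "x \<in> set S" "y \<in> preceding S x"
  obtains A B C where "S = A @ y # B @ x # C"
proof -
  obtain A R where S: "S = A @ y # R"
    using assms(3) preceding_subset by (metis split_list subsetD)
  have "x \<notin> set A"
  proof
    assume "x \<in> set A"
    then have "y \<in> set A"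
      using assms(3) preceding_subset unfolding S preceding_append by fastforce
    then show False
      using assms(1) S by simp
  qed
  moreover have "x \<noteq> y"
    using assms(3) not_in_preceding by fast
  ultimately have "x \<in> set R"
    using assms(2) S by simp
  then obtain B C where "R = B @ x # C"
    by (meson split_list)
  with S show thesis
    using that by simp
qed

lemma preceding_move_after:
  assumes "distinct (A @ y # B @ x # C)"
  shows "preceding (A @ B @ x # y # C) y = insert x (preceding (A @ y # B @ x # C) x) - {y}"
    and "preceding (A @ B @ x # y # C) x = preceding (A @ y # B @ x # C) x - {y}"
    and "z \<noteq> y \<Longrightarrow> preceding (A @ B @ x # y # C) z \<subseteq> preceding (A @ y # B @ x # C) z"
  using assms by (auto simp: preceding_append)

lemma reorder_preserves_double_nbhd_seq:
  assumes S: "double_nbhd_seq V E S" and S': "distinct S'" "set S' = set S"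
    and shrink: "\<And>z. z \<in> set S \<Longrightarrow> z \<noteq> y \<Longrightarrow> preceding S' z \<subseteq> preceding S z"
    and new_y: "dominates_new V E (preceding S' y) y"
  shows "double_nbhd_seq V E S'" and "set (seq1 V E S) \<subseteq> set (seq1 V E S')"
proof -
  have dS: "distinct S" and SV: "set S \<subseteq> V" and legal: "\<forall>z\<in>set S. double_legal V E (preceding S z) z"
    using S by (auto simp: double_nbhd_seq_iff)
  have "double_legal V E (preceding S' z) z" if "z \<in> set S'" for z
  proof (cases "z = y")
    case True
    show ?thesis
      unfolding True by (rule dominates_new_imp_double_legal[OF new_y])
  next
    case False
    have "double_legal V E (preceding S z) z"
      using legal that S'(2) by blast
    with False that S'(2) shrink show ?thesis
      by (metis double_legal_antimono finite_subset[OF preceding_subset] finite_set)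
  qed
  with S' SV show "double_nbhd_seq V E S'"
    by (simp add: double_nbhd_seq_iff)
  have "dominates_new V E (preceding S' z) z"
    if "z \<in> set S" "dominates_new V E (preceding S z) z" "z \<noteq> y" for z
    using dominates_new_antimono[OF that(2) shrink[OF that(1,3)]] .
  with new_y S' show "set (seq1 V E S) \<subseteq> set (seq1 V E S')"
    by (auto simp: set_seq1[OF dS] set_seq1[OF S'(1)])
qed

lemma seq1_psubset_by_moving:
  assumes S: "double_nbhd_seq V E S"
    and x: "x \<in> preceding S x'" "\<not> dominates_new V E (preceding S x) x"
    and w: "w \<in> cnbhd V E x" "{z \<in> preceding S x. w \<in> cnbhd V E z} = {y}"
    and w': "w' \<in> cnbhd V E y" "{z \<in> preceding S x'. w' \<in> cnbhd V E z} = {y}"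
  shows "\<exists>S'. double_nbhd_seq V E S' \<and> set S' = set S \<and> set (seq1 V E S) \<subset> set (seq1 V E S')"
proof -
  have dS: "distinct S"
    using S by (simp add: double_nbhd_seq_def)
  have "x \<in> set S" "y \<in> preceding S x"
    using x(1) w(2) preceding_subset by fastforce+
  then obtain A B C where S_eq: "S = A @ y # B @ x # C"
    using preceding_split dS by metis
  define S' where "S' = A @ B @ x # y # C"
  have dS': "distinct S'" and set_S': "set S' = set S"
    using dS unfolding S_eq S'_def by auto
  note moved = preceding_move_after[of A y B x C, folded S_eq S'_def, OF dS]
  have "preceding S' y \<subseteq> preceding S x' - {y}"
    using moved(1) x(1) preceding_trans by fast
  then have "w' \<notin> \<Union>(cnbhd V E ` preceding S' y)"
    using w'(2) by blast
  then have "dominates_new V E (preceding S' y) y"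
    using w'(1) unfolding dominates_new_def by blast
  note reordered = reorder_preserves_double_nbhd_seq[OF S dS' set_S' moved(3) this]
  have "w \<notin> \<Union>(cnbhd V E ` preceding S' x)"
    using moved(2) w(2) by blast
  then have "dominates_new V E (preceding S' x) x"
    using w(1) unfolding dominates_new_def by blast
  with x(2) \<open>x \<in> set S\<close> set_S' have "x \<in> set (seq1 V E S') - set (seq1 V E S)"
    by (simp add: set_seq1[OF dS] set_seq1[OF dS'])
  with reordered set_S' show ?thesis
    by blast
qed

lemma unique_dominator_exists:
  assumes "double_legal V E P x" "\<not> dominates_new V E P x" "finite P"
  obtains w y where "w \<in> cnbhd V E x" "{z \<in> P. w \<in> cnbhd V E z} = {y}"
proof -
  obtain w where w: "w \<in> cnbhd V E x" "card {z \<in> P. w \<in> cnbhd V E z} \<le> 1"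
    using assms(1) unfolding double_legal_def by blast
  have "{z \<in> P. w \<in> cnbhd V E z} \<noteq> {}"
    using assms(2) w(1) unfolding dominates_new_def by blast
  with w(2) assms(3) have "card {z \<in> P. w \<in> cnbhd V E z} = 1"
    by (simp add: le_Suc_eq card_eq_0_iff) blast
  then obtain y where "{z \<in> P. w \<in> cnbhd V E z} = {y}"
    by (rule card_1_singletonE)
  with w(1) show thesis
    by (rule that)
qed

lemma unique_earlier_dominator_in_seq1:
  assumes "distinct S" "{z \<in> preceding S x. w \<in> cnbhd V E z} = {y}"
  shows "y \<in> set (seq1 V E S)"
proof -
  have y: "y \<in> preceding S x" "w \<in> cnbhd V E y"
    using assms(2) by blast+
  then have "preceding S y \<subseteq> preceding S x - {y}"
    using preceding_trans not_in_preceding by fast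
  then have "w \<notin> \<Union>(cnbhd V E ` preceding S y)"
    using assms(2) by fastforce
  then have "dominates_new V E (preceding S y) y"
    using y(2) unfolding dominates_new_def by blast
  moreover have "y \<in> set S"
    using y(1) preceding_subset by fast
  ultimately show ?thesis
    by (simp add: set_seq1[OF assms(1)])
qed

lemma card_seq2_le_card_seq1:
  assumes S: "double_nbhd_seq V E S"
    and maximal: "\<And>S'. double_nbhd_seq V E S' \<Longrightarrow> set S' = set S \<Longrightarrow>
                     \<not> set (seq1 V E S) \<subset> set (seq1 V E S')"
  shows "card (set (seq2 V E S)) \<le> card (set (seq1 V E S))"
proof -
  have dS: "distinct S" and legal: "\<forall>x\<in>set S. double_legal V E (preceding S x) x"
    using S by (auto simp: double_nbhd_seq_iff)
  have "\<exists>w y. w \<in> cnbhd V E x \<and> {z \<in> preceding S x. w \<in> cnbhd V E z} = {y}"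
    if "x \<in> set (seq2 V E S)" for x
  proof -
    have "x \<in> set S" "\<not> dominates_new V E (preceding S x) x"
      using that by (simp_all add: set_seq2[OF dS])
    with legal show ?thesis
      by (metis unique_dominator_exists finite_subset[OF preceding_subset] finite_set)
  qed
  then obtain W Y where W: "\<And>x. x \<in> set (seq2 V E S) \<Longrightarrow> W x \<in> cnbhd V E x"
    and Y: "\<And>x. x \<in> set (seq2 V E S) \<Longrightarrow> {z \<in> preceding S x. W x \<in> cnbhd V E z} = {Y x}"
    by metis
  have W_Y: "W x \<in> cnbhd V E (Y x)" if "x \<in> set (seq2 V E S)" for x
    using Y[OF that] by blast
  have no_shared_dominator: False
    if x: "x \<in> set (seq2 V E S)" "x' \<in> set (seq2 V E S)" "Y x = Y x'" "x \<in> preceding S x'" for x x'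
  proof -
    have "\<not> dominates_new V E (preceding S x) x"
      using x(1) by (simp add: set_seq2[OF dS])
    with seq1_psubset_by_moving[OF S x(4) _ W[OF x(1)] Y[OF x(1)]
          W_Y[OF x(2), folded x(3)] Y[OF x(2), folded x(3)]]
    show False
      using maximal by blast
  qed
  have "inj_on Y (set (seq2 V E S))"
  proof (rule inj_onI, rule ccontr)
    fix x x' assume x: "x \<in> set (seq2 V E S)" "x' \<in> set (seq2 V E S)" "Y x = Y x'" "x \<noteq> x'"
    then have "x \<in> preceding S x' \<or> x' \<in> preceding S x"
      using preceding_total[of x S x'] by (simp add: set_seq2[OF dS])
    then show False
      using no_shared_dominator[OF x(1-3)] no_shared_dominator[OF x(2,1) x(3)[symmetric]] by blast
  qed
  then show ?thesis
    using unique_earlier_dominator_in_seq1[OF dS Y] by (intro card_inj_on_le) auto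
qed

lemma cnbhd_sym:
  assumes "simple_graph V E" "u \<in> V" "w \<in> V"
  shows "w \<in> cnbhd V E u \<longleftrightarrow> u \<in> cnbhd V E w"
  using assms by (auto simp: cnbhd_def simple_graph_def)

lemma two_le_card_cnbhd:
  assumes "simple_graph V E" "no_isolated V E" "w \<in> V"
  shows "2 \<le> card (cnbhd V E w)"
proof -
  obtain v where "E w v"
    using assms(2,3) by (auto simp: no_isolated_def)
  then have "v \<noteq> w" "{w, v} \<subseteq> cnbhd V E w"
    using assms(1) by (auto simp: cnbhd_def simple_graph_def)
  moreover have "finite (cnbhd V E w)"
    using assms(1) by (simp add: cnbhd_def simple_graph_def)
  ultimately show ?thesis
    by (metis card_2_iff card_mono)
qed

lemma double_nbhd_seq_snoc:
  assumes "double_nbhd_seq V E S" "u \<in> V" "u \<notin> set S" "double_legal V E (set S) u"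
  shows "double_nbhd_seq V E (S @ [u])"
  using assms by (auto simp: double_nbhd_seq_iff preceding_append)

lemma length_le_card:
  "double_nbhd_seq V E S \<Longrightarrow> finite V \<Longrightarrow> length S \<le> card V"
  unfolding double_nbhd_seq_def by (metis card_mono distinct_card)

lemma longest_double_nbhd_seq_is_DDS:
  assumes G: "simple_graph V E" and "no_isolated V E"
    and S: "double_nbhd_seq V E S"
    and longest: "\<And>T. double_nbhd_seq V E T \<Longrightarrow> length T \<le> length S"
  shows "is_DDS V E S"
proof -
  have "2 \<le> card (cnbhd V E w \<inter> set S)" if w: "w \<in> V" for w
  proof (rule ccontr)
    assume few: "\<not> 2 \<le> card (cnbhd V E w \<inter> set S)"
    with two_le_card_cnbhd[OF G \<open>no_isolated V E\<close> w] obtain u where u: "u \<in> cnbhd V E w" "u \<notin> set S"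
      by (metis Int_absorb2 subsetI)
    have uV: "u \<in> V" and SV: "set S \<subseteq> V"
      using u(1) w S by (auto simp: cnbhd_def double_nbhd_seq_def)
    have "{y \<in> set S. w \<in> cnbhd V E y} = cnbhd V E w \<inter> set S"
      using cnbhd_sym[OF G _ w] SV by blast
    moreover have "w \<in> cnbhd V E u"
      using cnbhd_sym[OF G uV w] u(1) by blast
    ultimately have "double_legal V E (set S) u"
      unfolding double_legal_def using few by (intro bexI[of _ w]) simp_all
    then have "double_nbhd_seq V E (S @ [u])"
      using double_nbhd_seq_snoc[OF S uV u(2)] by blast
    then show False
      using longest by fastforce
  qed
  with S show ?thesis
    by (simp add: is_DDS_def)
qed

lemma GDDS_exists:
  assumes "simple_graph V E" "no_isolated V E"
  shows "\<exists>S. is_GDDS V E S"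
proof -
  have "finite V"
    using assms(1) by (simp add: simple_graph_def)
  then have "\<forall>T. double_nbhd_seq V E T \<longrightarrow> length T < Suc (card V)"
    using length_le_card le_imp_less_Suc by blast
  moreover have "double_nbhd_seq V E []"
    by (simp add: double_nbhd_seq_def)
  ultimately obtain S where S: "double_nbhd_seq V E S"
    and longest: "\<forall>T. double_nbhd_seq V E T \<longrightarrow> length T \<le> length S"
    using ex_has_greatest_nat[of "double_nbhd_seq V E" "[]" length] by blast
  then have "is_DDS V E S"
    using longest_double_nbhd_seq_is_DDS[OF assms] by blast
  with longest show ?thesis
    unfolding is_GDDS_def is_DDS_def by blast
qed

lemma is_GDDS_same_set:
  assumes "is_GDDS V E S" "double_nbhd_seq V E S'" "set S' = set S"
  shows "is_GDDS V E S'"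
proof -
  have "length S' = length S"
    using assms by (metis distinct_card double_nbhd_seq_def is_DDS_def is_GDDS_def)
  with assms show ?thesis
    by (simp add: is_GDDS_def is_DDS_def)
qed

lemma gamma_gr2_eq_length:
  assumes "is_GDDS V E S"
  shows "gamma_gr2 V E = length S"
proof -
  have "{length T | T. is_DDS V E T} \<subseteq> {..length S}"
    using assms by (auto simp: is_GDDS_def)
  then show ?thesis
    unfolding gamma_gr2_def using assms
    by (intro Max_eqI) (auto simp: is_GDDS_def intro: finite_subset)
qed

lemma length_eq_card_seq1_add_card_seq2:
  assumes "distinct S"
  shows "length S = card (set (seq1 V E S)) + card (set (seq2 V E S))"
proof -
  have "set S = set (seq1 V E S) \<union> set (seq2 V E S)"
    "set (seq1 V E S) \<inter> set (seq2 V E S) = {}"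
    by (auto simp: set_seq1[OF assms] set_seq2[OF assms])
  then show ?thesis
    using distinct_card[OF assms] by (simp add: card_Un_disjoint)
qed

lemma GDDS_with_largest_seq1_exists:
  assumes "simple_graph V E" "no_isolated V E"
  obtains S where "is_GDDS V E S"
    and "\<And>T. is_GDDS V E T \<Longrightarrow> card (set (seq1 V E T)) \<le> card (set (seq1 V E S))"
proof -
  have "finite V"
    using assms(1) by (simp add: simple_graph_def)
  have "card (set (seq1 V E T)) < Suc (card V)" if "is_GDDS V E T" for T
  proof -
    have T: "double_nbhd_seq V E T"
      using that by (simp add: is_GDDS_def is_DDS_def)
    then have "card (set (seq1 V E T)) \<le> length T"
      using length_eq_card_seq1_add_card_seq2[of T V E] by (simp add: double_nbhd_seq_def)
    also have "\<dots> \<le> card V"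
      using length_le_card[OF T \<open>finite V\<close>] .
    finally show ?thesis
      by simp
  qed
  moreover obtain S0 where "is_GDDS V E S0"
    using GDDS_exists[OF assms] by blast
  ultimately show thesis
    using ex_has_greatest_nat[of "is_GDDS V E" S0 "\<lambda>T. card (set (seq1 V E T))" "Suc (card V)"] that
    by blast
qed

theorem corollary1:
  fixes V :: "'a set" and E :: "'a \<Rightarrow> 'a \<Rightarrow> bool"
  assumes "simple_graph V E" and "no_isolated V E"
  shows "\<exists>S. is_GDDS V E S \<and>
           card (set (seq1 V E S)) \<ge> card (set (seq2 V E S)) \<and>
           2 * card (set (seq1 V E S)) \<ge> gamma_gr2 V E"
proof -
  obtain S where S: "is_GDDS V E S"
    and largest: "\<And>T. is_GDDS V E T \<Longrightarrow> card (set (seq1 V E T)) \<le> card (set (seq1 V E S))"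
    using GDDS_with_largest_seq1_exists[OF assms] by blast
  then have S_seq: "double_nbhd_seq V E S"
    by (simp add: is_GDDS_def is_DDS_def)
  have "card (set (seq2 V E S)) \<le> card (set (seq1 V E S))"
  proof (rule card_seq2_le_card_seq1[OF S_seq])
    fix S' assume "double_nbhd_seq V E S'" "set S' = set S"
    then have "card (set (seq1 V E S')) \<le> card (set (seq1 V E S))"
      by (intro largest is_GDDS_same_set[OF S])
    then show "\<not> set (seq1 V E S) \<subset> set (seq1 V E S')"
      using psubset_card_mono[of "set (seq1 V E S')" "set (seq1 V E S)"] by auto
  qed
  moreover have "gamma_gr2 V E = card (set (seq1 V E S)) + card (set (seq2 V E S))"
    using gamma_gr2_eq_length[OF S] length_eq_card_seq1_add_card_seq2[of S V E] S_seq
    by (simp add: double_nbhd_seq_def)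
  ultimately show ?thesis
    using S by auto
qed

end
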